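(* Let $H$ be a maximal outerplanar graph of diameter $3$ with maximum degree $\Delta=\Delta(H)$, containing vertices $v_0,v_1,\dots,v_5$ which induce a copy of $G_6^1$ (with edges $v_1v_0, v_0v_4, v_4v_3, v_3v_5, v_5v_2, v_2v_1, v_0v_2, v_0v_3, v_2v_3$), and such that $d(v_0)=d(v_2)=d(v_3)=\Delta$. Then $\chi'_{st}(H)\ge \Delta+2$.
   Context: A star edge coloring of a graph $G$ is a proper edge coloring of $G$ in which no path or cycle with four edges is bichromatic. The star chromatic index $\chi'_{st}(G)$ is the minimum number of colors in a star edge coloring of $G$. An outerplanar graph is a graph drawable in the plane without crossings with all vertices on the outer face; it is maximal outerplanar if adding any edge between two nonadjacent vertices yields a non-outerplanar graph. $d(v)$ is the degree of $v$ in $H$. (In the paper this graph is denoted $H_{n_\Delta}$.) *)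

theory Defs
  imports Main
begin

definition simple_graph :: "'a set \<Rightarrow> 'a set set \<Rightarrow> bool" where
  "simple_graph V E \<longleftrightarrow> finite V \<and> (\<forall>e\<in>E. \<exists>x y. e = {x, y} \<and> x \<in> V \<and> y \<in> V \<and> x \<noteq> y)"

definition degree :: "'a set set \<Rightarrow> 'a \<Rightarrow> nat" where
  "degree E v = card {e \<in> E. v \<in> e}"

definition max_degree :: "'a set \<Rightarrow> 'a set set \<Rightarrow> nat" where
  "max_degree V E = Max (degree E ` V)"

definition walk :: "'a set set \<Rightarrow> 'a list \<Rightarrow> bool" where
  "walk E xs \<longleftrightarrow> xs \<noteq> [] \<and> (\<forall>i. Suc i < length xs \<longrightarrow> {xs ! i, xs ! Suc i} \<in> E)"

definition reachable_in :: "'a set set \<Rightarrow> 'a \<Rightarrow> 'a \<Rightarrow> nat \<Rightarrow> bool" where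
  "reachable_in E x y n \<longleftrightarrow>
     (\<exists>xs. walk E xs \<and> hd xs = x \<and> last xs = y \<and> length xs = Suc n)"

definition gdist :: "'a set set \<Rightarrow> 'a \<Rightarrow> 'a \<Rightarrow> nat" where
  "gdist E x y = (LEAST n. reachable_in E x y n)"

definition graph_connected :: "'a set \<Rightarrow> 'a set set \<Rightarrow> bool" where
  "graph_connected V E \<longleftrightarrow> (\<forall>x\<in>V. \<forall>y\<in>V. \<exists>n. reachable_in E x y n)"

definition has_diameter :: "'a set \<Rightarrow> 'a set set \<Rightarrow> nat \<Rightarrow> bool" where
  "has_diameter V E d \<longleftrightarrow> graph_connected V E \<and>
     Max {gdist E x y | x y. x \<in> V \<and> y \<in> V} = d"

text \<open>Outerplanarity (combinatorial form): the vertices can be placed in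
  convex position (numbered 0..n-1 around a circle) so that no two edges,
  drawn as straight chords, cross.\<close>

definition outerplanar :: "'a set \<Rightarrow> 'a set set \<Rightarrow> bool" where
  "outerplanar V E \<longleftrightarrow> (\<exists>f :: 'a \<Rightarrow> nat. bij_betw f V {..<card V} \<and>
     (\<forall>a b c d. {a, b} \<in> E \<longrightarrow> {c, d} \<in> E \<longrightarrow>
        \<not> (f a < f c \<and> f c < f b \<and> f b < f d)))"

definition maximal_outerplanar :: "'a set \<Rightarrow> 'a set set \<Rightarrow> bool" where
  "maximal_outerplanar V E \<longleftrightarrow> simple_graph V E \<and> outerplanar V E \<and>
     (\<forall>x\<in>V. \<forall>y\<in>V. x \<noteq> y \<longrightarrow> {x, y} \<notin> E \<longrightarrow> \<not> outerplanar V (insert {x, y} E))"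

definition proper_edge_coloring :: "'a set set \<Rightarrow> ('a set \<Rightarrow> nat) \<Rightarrow> bool" where
  "proper_edge_coloring E c \<longleftrightarrow>
     (\<forall>e\<in>E. \<forall>e'\<in>E. e \<noteq> e' \<longrightarrow> e \<inter> e' \<noteq> {} \<longrightarrow> c e \<noteq> c e')"

text \<open>A path with four edges x0 x1 x2 x3 x4 (distinct vertices) or a cycle with
  four edges x0 x1 x2 x3 x0 (x4 = x0, x0..x3 distinct) is bichromatic if its
  four edges receive exactly two colours.\<close>

definition star_edge_coloring :: "'a set set \<Rightarrow> ('a set \<Rightarrow> nat) \<Rightarrow> bool" where
  "star_edge_coloring E c \<longleftrightarrow> proper_edge_coloring E c \<and>
     (\<forall>x0 x1 x2 x3 x4.
        distinct [x0, x1, x2, x3] \<and> (x4 = x0 \<or> distinct [x0, x1, x2, x3, x4]) \<and>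
        {x0, x1} \<in> E \<and> {x1, x2} \<in> E \<and> {x2, x3} \<in> E \<and> {x3, x4} \<in> E \<longrightarrow>
        card (c ` {{x0, x1}, {x1, x2}, {x2, x3}, {x3, x4}}) \<noteq> 2)"

definition star_chromatic_index :: "'a set set \<Rightarrow> nat" where
  "star_chromatic_index E =
     (LEAST k. \<exists>c. star_edge_coloring E c \<and> c ` E \<subseteq> {..<k})"

definition G61_edges :: "nat set set" where
  "G61_edges = {{1,0}, {0,4}, {4,3}, {3,5}, {5,2}, {2,1}, {0,2}, {0,3}, {2,3}}"

end

theory Submission
  imports Defs
begin

text \<open>The triangle v0 v2 v3 has all three vertices of maximum degree D, and each of its
  sides xy carries an ear, a common neighbour w of x and y outside the triangle (v1, v4, v5).
  With only D + 1 colors, each triangle vertex misses at most one color. If two triangle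
  vertices x, y both saw the color of their opposite triangle side, the path through the
  third vertex would extend to a bichromatic path with four edges; so at least two of them
  miss that color and consequently see every other color. But then y sees the color of xw
  and x sees the color of yw, which again gives a bichromatic path through x w y.\<close>

lemma simple_graph_finite_edges:
  assumes "simple_graph V E"
  shows "finite E"
proof -
  have "E \<subseteq> Pow V" "finite V" using assms unfolding simple_graph_def by auto
  then show ?thesis by (meson finite_Pow_iff finite_subset)
qed

lemma simple_graph_edge_at:
  assumes "simple_graph V E" "e \<in> E" "x \<in> e"
  obtains w where "e = {x, w}" "x \<noteq> w"
proof -
  obtain a b where "e = {a, b}" "a \<noteq> b" using assms unfolding simple_graph_def by blast
  with assms(3) that show thesis by (auto simp: insert_commute)
qed

lemma simple_graph_edge_neq:
  assumes "simple_graph V E" "{x, y} \<in> E"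
  shows "x \<noteq> y"
  using assms unfolding simple_graph_def by (metis doubleton_eq_iff insert_absorb2)

lemma proper_edge_coloring_adjacent:
  assumes "proper_edge_coloring E c" "{x, y} \<in> E" "{x, z} \<in> E" "y \<noteq> z"
  shows "c {x, y} \<noteq> c {x, z}"
  using assms unfolding proper_edge_coloring_def by (auto simp: doubleton_eq_iff)

lemma star_edge_coloring_proper: "star_edge_coloring E c \<Longrightarrow> proper_edge_coloring E c"
  unfolding star_edge_coloring_def by blast

definition colors_at :: "'a set set \<Rightarrow> ('a set \<Rightarrow> nat) \<Rightarrow> 'a \<Rightarrow> nat set" where
  "colors_at E c v = c ` {e \<in> E. v \<in> e}"

lemma card_colors_at:
  assumes "finite E" "proper_edge_coloring E c"
  shows "card (colors_at E c v) = degree E v"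
proof -
  have "inj_on c {e \<in> E. v \<in> e}"
    using assms(2) unfolding inj_on_def proper_edge_coloring_def by blast
  then show ?thesis unfolding colors_at_def degree_def by (rule card_image)
qed

lemma colors_at_missing_unique:
  assumes "finite E" "proper_edge_coloring E c" "c ` E \<subseteq> {..<D+1}" "degree E v = D"
    and "\<alpha> < D + 1" "\<alpha> \<notin> colors_at E c v"
    and "\<beta> < D + 1" "\<beta> \<notin> colors_at E c v"
  shows "\<alpha> = \<beta>"
proof (rule ccontr)
  assume "\<alpha> \<noteq> \<beta>"
  have "colors_at E c v \<subseteq> {..<D+1} - {\<alpha>, \<beta>}"
    using assms(3,6,8) unfolding colors_at_def by auto
  then have "card (colors_at E c v) \<le> card ({..<D+1} - {\<alpha>, \<beta>})" by (simp add: card_mono)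
  also have "\<dots> = D - 1" using \<open>\<alpha> \<noteq> \<beta>\<close> assms(5,7) by (subst card_Diff_subset) auto
  finally show False using card_colors_at[OF assms(1,2), of v] assms(4,5,7) \<open>\<alpha> \<noteq> \<beta>\<close> by linarith
qed

lemma star_edge_coloring_path_colors:
  assumes sg: "simple_graph V E" and st: "star_edge_coloring E c"
    and xy: "{x, y} \<in> E" and yz: "{y, z} \<in> E" and "x \<noteq> z"
  shows "\<not> (c {y, z} \<in> colors_at E c x \<and> c {x, y} \<in> colors_at E c z)"
proof
  assume "c {y, z} \<in> colors_at E c x \<and> c {x, y} \<in> colors_at E c z"
  then obtain e f where e: "e \<in> E" "x \<in> e" "c e = c {y, z}" and f: "f \<in> E" "z \<in> f" "c f = c {x, y}"
    unfolding colors_at_def by auto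
  obtain w where w: "e = {x, w}" "x \<noteq> w" using simple_graph_edge_at[OF sg e(1,2)] .
  obtain u where u: "f = {z, u}" "z \<noteq> u" using simple_graph_edge_at[OF sg f(1,2)] .
  have pr: "proper_edge_coloring E c" using star_edge_coloring_proper[OF st] .
  have "x \<noteq> y" "y \<noteq> z" using simple_graph_edge_neq[OF sg] xy yz by auto
  have xy_yz: "c {x, y} \<noteq> c {y, z}"
    using proper_edge_coloring_adjacent[OF pr, of y x z] xy yz \<open>x \<noteq> z\<close> by (simp add: insert_commute)
  have "w \<noteq> y" using e w xy_yz by auto
  moreover have "w \<noteq> z"
    using proper_edge_coloring_adjacent[OF pr, of z x y] e w yz \<open>x \<noteq> y\<close> by (auto simp: insert_commute)
  moreover have "u \<noteq> y" using f u xy_yz by (auto simp: insert_commute)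
  moreover have "u \<noteq> x"
    using proper_edge_coloring_adjacent[OF pr, of x z y] f u xy \<open>y \<noteq> z\<close> by (auto simp: insert_commute)
  ultimately have "distinct [w, x, y, z]" "u = w \<or> distinct [w, x, y, z, u]"
    using w u \<open>x \<noteq> y\<close> \<open>y \<noteq> z\<close> \<open>x \<noteq> z\<close> by auto
  moreover have "{w, x} \<in> E" "{z, u} \<in> E" using e f w u by (simp_all add: insert_commute)
  moreover have "c ` {{w, x}, {x, y}, {y, z}, {z, u}} = {c {x, y}, c {y, z}}"
    using e f w u by (auto simp: insert_commute)
  then have "card (c ` {{w, x}, {x, y}, {y, z}, {z, u}}) = 2" using xy_yz by simp
  ultimately show False using st xy yz unfolding star_edge_coloring_def by blast
qed

lemma star_edge_coloring_common_neighbour: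
  assumes sg: "simple_graph V E" and st: "star_edge_coloring E c" and rng: "c ` E \<subseteq> {..<D+1}"
    and "degree E x = D" "degree E y = D" "x \<noteq> y"
    and xw: "{x, w} \<in> E" and yw: "{y, w} \<in> E" and xz: "{x, z} \<in> E" and yz: "{y, z} \<in> E"
    and "w \<noteq> z"
  shows "c {y, z} \<in> colors_at E c x \<or> c {x, z} \<in> colors_at E c y"
proof (rule ccontr)
  assume none: "\<not> (c {y, z} \<in> colors_at E c x \<or> c {x, z} \<in> colors_at E c y)"
  have fin: "finite E" using simple_graph_finite_edges[OF sg] .
  have pr: "proper_edge_coloring E c" using star_edge_coloring_proper[OF st] .
  have lt: "c e < D + 1" if "e \<in> E" for e using rng that by auto
  have "c {y, w} \<in> colors_at E c x"
    using colors_at_missing_unique[OF fin pr rng \<open>degree E x = D\<close>, of "c {y, w}" "c {y, z}"]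
      proper_edge_coloring_adjacent[OF pr yw yz \<open>w \<noteq> z\<close>] none lt yw yz by blast
  moreover have "c {x, w} \<in> colors_at E c y"
    using colors_at_missing_unique[OF fin pr rng \<open>degree E y = D\<close>, of "c {x, w}" "c {x, z}"]
      proper_edge_coloring_adjacent[OF pr xw xz \<open>w \<noteq> z\<close>] none lt xw xz by blast
  ultimately show False
    using star_edge_coloring_path_colors[OF sg st xw, of y] yw \<open>x \<noteq> y\<close> by (simp add: insert_commute)
qed

lemma triangle_with_ears_no_star_edge_coloring:
  assumes sg: "simple_graph V E" and st: "star_edge_coloring E c" and rng: "c ` E \<subseteq> {..<D+1}"
    and deg: "degree E x = D" "degree E y = D" "degree E z = D"
    and xy: "{x, y} \<in> E" and xz: "{x, z} \<in> E" and yz: "{y, z} \<in> E"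
    and ear_x: "{y, p} \<in> E" "{z, p} \<in> E" "p \<noteq> x"
    and ear_y: "{x, q} \<in> E" "{z, q} \<in> E" "q \<noteq> y"
    and ear_z: "{x, r} \<in> E" "{y, r} \<in> E" "r \<noteq> z"
  shows False
proof -
  have yx: "{y, x} \<in> E" and zx: "{z, x} \<in> E" and zy: "{z, y} \<in> E"
    using xy xz yz by (simp_all add: insert_commute)
  have "x \<noteq> y" "x \<noteq> z" "y \<noteq> z" using simple_graph_edge_neq[OF sg] xy xz yz by auto
  note ear = star_edge_coloring_common_neighbour[OF sg st rng]
  note path = star_edge_coloring_path_colors[OF sg st]
  have "c {y, z} \<in> colors_at E c x \<or> c {x, z} \<in> colors_at E c y"
    using ear[OF deg(1,2) \<open>x \<noteq> y\<close> ear_z(1,2) xz yz ear_z(3)] .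
  moreover have "c {z, y} \<in> colors_at E c x \<or> c {x, y} \<in> colors_at E c z"
    using ear[OF deg(1,3) \<open>x \<noteq> z\<close> ear_y(1,2) xy zy ear_y(3)] .
  moreover have "c {z, x} \<in> colors_at E c y \<or> c {y, x} \<in> colors_at E c z"
    using ear[OF deg(2,3) \<open>y \<noteq> z\<close> ear_x(1,2) yx zx ear_x(3)] .
  moreover have "\<not> (c {z, y} \<in> colors_at E c x \<and> c {x, z} \<in> colors_at E c y)"
    using path[OF xz zy \<open>x \<noteq> y\<close>] .
  moreover have "\<not> (c {y, z} \<in> colors_at E c x \<and> c {x, y} \<in> colors_at E c z)"
    using path[OF xy yz \<open>x \<noteq> z\<close>] .
  moreover have "\<not> (c {x, z} \<in> colors_at E c y \<and> c {y, x} \<in> colors_at E c z)"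
    using path[OF yx xz \<open>y \<noteq> z\<close>] .
  ultimately show False by (auto simp: insert_commute)
qed

lemma inj_on_star_edge_coloring:
  assumes "inj_on c E"
  shows "star_edge_coloring E c"
  unfolding star_edge_coloring_def proper_edge_coloring_def
proof (intro conjI ballI allI impI)
  show "c e \<noteq> c e'" if "e \<in> E" "e' \<in> E" "e \<noteq> e'" for e e'
    using assms that by (meson inj_onD)
next
  fix x0 x1 x2 x3 x4 :: 'a
  assume path: "distinct [x0, x1, x2, x3] \<and> (x4 = x0 \<or> distinct [x0, x1, x2, x3, x4]) \<and>
    {x0, x1} \<in> E \<and> {x1, x2} \<in> E \<and> {x2, x3} \<in> E \<and> {x3, x4} \<in> E"
  let ?F = "{{x0, x1}, {x1, x2}, {x2, x3}, {x3, x4}}"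
  have "card {{x0, x1}, {x1, x2}, {x2, x3}} = 3"
    using path by (auto simp: doubleton_eq_iff)
  then have "3 \<le> card ?F" by (metis card_mono finite.emptyI finite.insertI insert_mono subset_insertI)
  moreover have "card (c ` ?F) = card ?F"
    using path by (intro card_image inj_on_subset[OF assms]) auto
  ultimately show "card (c ` ?F) \<noteq> 2" by simp
qed

lemma star_chromatic_index_gt:
  assumes "finite E" and no_coloring: "\<And>c. star_edge_coloring E c \<Longrightarrow> c ` E \<subseteq> {..<k} \<Longrightarrow> False"
  shows "k < star_chromatic_index E"
proof -
  let ?P = "\<lambda>k. \<exists>c. star_edge_coloring E c \<and> c ` E \<subseteq> {..<k}"
  obtain g where "bij_betw g E {..<card E}"
    using ex_bij_betw_finite_nat[OF assms(1)] by (auto simp: atLeast0LessThan)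
  then have "?P (card E)"
    using inj_on_star_edge_coloring[of g E] unfolding bij_betw_def by blast
  then have "?P (star_chromatic_index E)"
    unfolding star_chromatic_index_def by (rule LeastI)
  then show ?thesis using no_coloring by (meson lessThan_subset_iff not_less subset_trans)
qed

theorem theorem3p4:
  fixes V :: "'a set" and E :: "'a set set" and v :: "nat \<Rightarrow> 'a"
  assumes "maximal_outerplanar V E"
    and "has_diameter V E 3"
    and "\<forall>i<6. v i \<in> V"
    and "inj_on v {..<6}"
    and "\<forall>i<6. \<forall>j<6. i \<noteq> j \<longrightarrow> ({v i, v j} \<in> E \<longleftrightarrow> {i, j} \<in> G61_edges)"
    and "degree E (v 0) = max_degree V E"
    and "degree E (v 2) = max_degree V E"
    and "degree E (v 3) = max_degree V E"
  shows "star_chromatic_index E \<ge> max_degree V E + 2"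
proof -
  have sg: "simple_graph V E" using assms(1) unfolding maximal_outerplanar_def by blast
  have edge: "{v i, v j} \<in> E" if "{i, j} \<in> G61_edges" "i < 6" "j < 6" "i \<noteq> j" for i j
    using assms(5) that by blast
  have triangle: "{v 0, v 2} \<in> E" "{v 0, v 3} \<in> E" "{v 2, v 3} \<in> E"
    and ears: "{v 2, v 5} \<in> E" "{v 3, v 5} \<in> E" "{v 0, v 4} \<in> E" "{v 3, v 4} \<in> E"
      "{v 0, v 1} \<in> E" "{v 2, v 1} \<in> E"
    by (rule edge; simp add: G61_edges_def doubleton_eq_iff)+
  have "v 5 \<noteq> v 0" "v 4 \<noteq> v 2" "v 1 \<noteq> v 3"
    using inj_onD[OF assms(4), of 5 0] inj_onD[OF assms(4), of 4 2] inj_onD[OF assms(4), of 1 3]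
    by auto
  have "max_degree V E + 1 < star_chromatic_index E"
  proof (rule star_chromatic_index_gt[OF simple_graph_finite_edges[OF sg]])
    fix c assume coloring: "star_edge_coloring E c" "c ` E \<subseteq> {..<max_degree V E + 1}"
    show False
      using triangle_with_ears_no_star_edge_coloring[OF sg coloring assms(6-8) triangle
          ears(1,2) \<open>v 5 \<noteq> v 0\<close> ears(3,4) \<open>v 4 \<noteq> v 2\<close> ears(5,6) \<open>v 1 \<noteq> v 3\<close>] .
  qed
  then show ?thesis by simp
qed

end
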